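(* Let $f_0$ be a continuous probability density on $\mathbb{R}$ with $f_0(-z)=f_0(z)$ for all $z$, and let $F_0(x)=\int_{-\infty}^x f_0(z)\,dz$. For $\alpha>0,\theta>0$ let $g(\theta\mid\alpha)=\alpha f_0(\alpha\theta)$. Assume: (a) for all $0<\alpha_1<\alpha_2$, the ratio $g(\theta\mid\alpha_2)/g(\theta\mid\alpha_1)$ is strictly monotone in $\theta\in(0,\infty)$ (strict monotone likelihood ratio); (b) for all $0<\alpha_1<\alpha_2$, the function $\theta\mapsto \log\frac{g(\theta\mid\alpha_2)}{g(\theta\mid\alpha_1)}$ is convex on $(0,\infty)$. Let $X$ have density $\frac1\sigma f_0\big(\frac{x-\mu}{\sigma}\big)$, $\mu\in\mathbb{R}$, $\sigma>0$. Then: (i) for each $c>1$ the equation $$\frac{f_0\big(\frac{c}{c+1}\theta\big)}{f_0\big(\frac{c}{c-1}\theta\big)} = \frac{c+1}{c-1}$$ has a unique root $\theta=\theta(c)>0$; (ii) $\theta(c)$ is continuous in $c\in(1,\infty)$; (iii) for every $c>1$, $$\inf_{\mu\in\mathbb{R},\,\sigma>0} P_{\mu,\sigma}\big(X-c|X|\le\mu\le X+c|X|\big) = \psi(c) := F_0\Big(\frac{c}{c+1}\theta(c)\Big)+1-F_0\Big(\frac{c}{c-1}\theta(c)\Big);$$ (iv) $\psi(c)$ is continuous in $c\in(1,\infty)$. *)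

theory Defs
  imports "HOL-Analysis.Analysis"
begin

definition sym_cont_density :: "(real \<Rightarrow> real) \<Rightarrow> bool" where
  "sym_cont_density f0 \<longleftrightarrow>
     continuous_on UNIV f0 \<and> (\<forall>z. 0 \<le> f0 z) \<and>
     integrable lborel f0 \<and> integral\<^sup>L lborel f0 = 1 \<and>
     (\<forall>z. f0 (- z) = f0 z)"

definition cdf0 :: "(real \<Rightarrow> real) \<Rightarrow> real \<Rightarrow> real" where
  "cdf0 f0 x = (LINT z:{..x}|lborel. f0 z)"

definition gsc :: "(real \<Rightarrow> real) \<Rightarrow> real \<Rightarrow> real \<Rightarrow> real" where
  "gsc f0 \<alpha> \<theta> = \<alpha> * f0 (\<alpha> * \<theta>)"

definition strictly_monotone_on :: "real set \<Rightarrow> (real \<Rightarrow> real) \<Rightarrow> bool" where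
  "strictly_monotone_on A h \<longleftrightarrow>
     monotone_on A (<) (<) h \<or> monotone_on A (<) (>) h"

definition root_eq :: "(real \<Rightarrow> real) \<Rightarrow> real \<Rightarrow> real \<Rightarrow> bool" where
  "root_eq f0 c \<theta> \<longleftrightarrow>
     f0 (c / (c + 1) * \<theta>) / f0 (c / (c - 1) * \<theta>) = (c + 1) / (c - 1)"

definition theta :: "(real \<Rightarrow> real) \<Rightarrow> real \<Rightarrow> real" where
  "theta f0 c = (THE t. 0 < t \<and> root_eq f0 c t)"

definition psi :: "(real \<Rightarrow> real) \<Rightarrow> real \<Rightarrow> real" where
  "psi f0 c = cdf0 f0 (c / (c + 1) * theta f0 c) + 1 - cdf0 f0 (c / (c - 1) * theta f0 c)"

definition locscale :: "(real \<Rightarrow> real) \<Rightarrow> real \<Rightarrow> real \<Rightarrow> real measure" where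
  "locscale f0 \<mu> \<sigma> = density lborel (\<lambda>x. ennreal (f0 ((x - \<mu>) / \<sigma>) / \<sigma>))"

definition cover_prob :: "(real \<Rightarrow> real) \<Rightarrow> real \<Rightarrow> real \<Rightarrow> real \<Rightarrow> real" where
  "cover_prob f0 c \<mu> \<sigma> =
     measure (locscale f0 \<mu> \<sigma>) {x. x - c * \<bar>x\<bar> \<le> \<mu> \<and> \<mu> \<le> x + c * \<bar>x\<bar>}"

end

theory Submission
  imports Defs "HOL-Probability.Distribution_Functions"
begin

text \<open>
  Standardising \<open>X = \<mu> + \<sigma> Z\<close> with \<open>Z \<sim> f\<^sub>0\<close> and using the symmetry of \<open>f\<^sub>0\<close>, the coverage
  probability depends only on \<open>t = |\<mu>|/\<sigma>\<close> and equals
  \<open>q(t) = F\<^sub>0(A t) + 1 - F\<^sub>0(B t)\<close> with \<open>A = c/(c+1) < B = c/(c-1)\<close>.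
  Then \<open>q(0) = 1 = q(\<infinity>)\<close>, \<open>q \<le> 1\<close>, and \<open>q'(t) = g(t|A) - g(t|B)\<close> has the sign of
  \<open>1 - g(t|B)/g(t|A)\<close>. The likelihood ratio is strictly monotone, so \<open>q'\<close> has at most one
  positive zero; it has one since \<open>q\<close> returns to its boundary values, and the ratio must be
  decreasing there, since otherwise \<open>q\<close> would rise above \<open>q(0) = 1\<close>. Hence \<open>q\<close> decreases up
  to the unique root \<open>\<theta>(c)\<close> of the equation in (i) and increases afterwards, so the infimum is
  \<open>q(\<theta>(c)) = \<psi>(c)\<close>; continuity of \<open>\<theta>\<close> follows because a strict sign change of \<open>q'\<close>
  persists under small perturbations of \<open>c\<close>.
\<close>

lemma abs_le_mult_abs_diff_iff:
  fixes c n z :: real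
  assumes "1 < c" "0 \<le> n"
  shows "\<bar>z\<bar> \<le> c * \<bar>z - n\<bar> \<longleftrightarrow> z \<le> c / (c + 1) * n \<or> c / (c - 1) * n \<le> z"
proof -
  have lower: "z \<le> c / (c + 1) * n \<longleftrightarrow> z + c * z \<le> c * n"
    and upper: "c / (c - 1) * n \<le> z \<longleftrightarrow> c * n \<le> c * z - z"
    using assms by (simp_all add: field_simps)
  have "0 \<le> c * n"
    using assms by simp
  consider "n \<le> z" | "0 \<le> z" "z < n" | "z < 0"
    by linarith
  then show ?thesis
  proof cases
    case 1
    then have "c * n \<le> c * z" "\<bar>z\<bar> = z" "c * \<bar>z - n\<bar> = c * z - c * n"
      using assms by (simp_all add: right_diff_distrib)
    then show ?thesis
      unfolding lower upper using 1 assms by linarith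
  next
    case 2
    then have "c * z < c * n" "\<bar>z\<bar> = z" "c * \<bar>z - n\<bar> = c * n - c * z"
      using assms by (simp_all add: right_diff_distrib)
    then show ?thesis
      unfolding lower upper using 2 by linarith
  next
    case 3
    then have "c * z \<le> z" "\<bar>z\<bar> = - z" "c * \<bar>z - n\<bar> = c * n - c * z"
      using assms mult_right_mono_neg[of 1 c z] by (simp_all add: right_diff_distrib)
    then show ?thesis
      unfolding lower upper using 3 \<open>0 \<le> c * n\<close> by linarith
  qed
qed

lemma abs_standardize_coverage_event:
  fixes \<mu> \<sigma> c z :: real
  assumes "0 < \<sigma>"
  shows "(\<mu> + \<sigma> * z - c * \<bar>\<mu> + \<sigma> * z\<bar> \<le> \<mu> \<and> \<mu> \<le> \<mu> + \<sigma> * z + c * \<bar>\<mu> + \<sigma> * z\<bar>)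
     \<longleftrightarrow> \<bar>z\<bar> \<le> c * \<bar>z + \<mu> / \<sigma>\<bar>"
proof -
  have "\<mu> + \<sigma> * z = \<sigma> * (z + \<mu> / \<sigma>)"
    using assms by (simp add: field_simps)
  then have "c * \<bar>\<mu> + \<sigma> * z\<bar> = \<sigma> * (c * \<bar>z + \<mu> / \<sigma>\<bar>)"
    using assms by (simp add: abs_mult)
  moreover have "\<bar>\<sigma> * z\<bar> = \<sigma> * \<bar>z\<bar>"
    using assms by (simp add: abs_mult)
  ultimately have "(\<mu> + \<sigma> * z - c * \<bar>\<mu> + \<sigma> * z\<bar> \<le> \<mu> \<and> \<mu> \<le> \<mu> + \<sigma> * z + c * \<bar>\<mu> + \<sigma> * z\<bar>)
      \<longleftrightarrow> \<sigma> * \<bar>z\<bar> \<le> \<sigma> * (c * \<bar>z + \<mu> / \<sigma>\<bar>)"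
    using abs_le_iff[of "\<sigma> * z"] by linarith
  then show ?thesis
    using assms by simp
qed

lemma strictly_monotone_on_nonneg_imp_pos:
  fixes h :: "real \<Rightarrow> real"
  assumes mono: "strictly_monotone_on {0<..} h" and nonneg: "\<And>t. 0 < t \<Longrightarrow> 0 \<le> h t"
    and "0 < x"
  shows "0 < h x"
  using mono unfolding strictly_monotone_on_def
proof
  assume "monotone_on {0<..} (<) (<) h"
  then have "h (x / 2) < h x"
    using \<open>0 < x\<close> by (auto simp: monotone_on_def)
  with nonneg[of "x / 2"] \<open>0 < x\<close> show ?thesis
    by simp
next
  assume "monotone_on {0<..} (<) (>) h"
  then have "h (2 * x) < h x"
    using \<open>0 < x\<close> by (auto simp: monotone_on_def)
  with nonneg[of "2 * x"] \<open>0 < x\<close> show ?thesis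
    by simp
qed

lemma deriv_has_root_if_max_at_endpoints:
  fixes q D :: "real \<Rightarrow> real"
  assumes deriv: "\<And>t. DERIV q t :> D t" and cont: "continuous_on {0<..} D"
    and le: "\<And>t. 0 \<le> t \<Longrightarrow> q t \<le> q 0" and lim: "(q \<longlongrightarrow> q 0) at_top"
  shows "\<exists>\<theta>>0. D \<theta> = 0"
proof (rule ccontr)
  assume "\<not> ?thesis"
  then have nz: "D t \<noteq> 0" if "0 < t" for t
    using that by auto
  have q_cont: "continuous_on S q" for S
    using deriv by (intro continuous_at_imp_continuous_on ballI DERIV_isCont)
  have deriv_ex: "P (D t) \<Longrightarrow> \<exists>y. DERIV q t :> y \<and> P y" for P t
    using deriv by blast
  show False
  proof (cases "\<exists>t0>0. 0 < D t0")
    case True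
    then obtain t0 where t0: "0 < t0" "0 < D t0"
      by blast
    have pos: "0 < D s" if s: "0 < s" "s \<le> t0" for s
    proof (rule ccontr)
      assume "\<not> 0 < D s"
      moreover have "continuous_on {s..t0} D"
        using s by (intro continuous_on_subset[OF cont]) auto
      ultimately obtain x where "s \<le> x" "x \<le> t0" "D x = 0"
        using IVT'[of D s 0 t0] t0 s by auto
      with nz s show False
        by auto
    qed
    have "q 0 < q t0"
      by (rule DERIV_pos_imp_increasing_open[OF t0(1) _ q_cont]) (auto intro!: deriv_ex pos)
    with le[of t0] t0 show False
      by simp
  next
    case False
    then have neg: "D t < 0" if "0 < t" for t
      using nz[OF that] that by force
    have "q 1 < q 0"
      by (rule DERIV_neg_imp_decreasing_open[OF _ _ q_cont]) (auto intro!: deriv_ex neg)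
    moreover have "q t \<le> q 1" if "1 \<le> t" for t
      by (rule DERIV_nonpos_imp_decreasing_open[OF that _ q_cont])
        (auto intro!: deriv_ex less_imp_le neg)
    then have "q 0 \<le> q 1"
      by (intro tendsto_upperbound[OF lim]) (auto simp: eventually_at_top_linorder)
    ultimately show False
      by simp
  qed
qed

definition sign_change_at :: "(real \<Rightarrow> real) \<Rightarrow> real \<Rightarrow> bool" where
  "sign_change_at D \<theta> \<longleftrightarrow> 0 < \<theta> \<and> D \<theta> = 0 \<and>
     (\<forall>t. 0 < t \<longrightarrow> t < \<theta> \<longrightarrow> D t < 0) \<and> (\<forall>t. \<theta> < t \<longrightarrow> 0 < D t)"

lemma sign_change_at_unique:
  assumes "sign_change_at D \<theta>"
  shows "0 < t \<and> D t = 0 \<longleftrightarrow> t = \<theta>"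
  using assms unfolding sign_change_at_def by (cases t \<theta> rule: linorder_cases) auto

lemma sign_change_at_neg_iff:
  assumes "sign_change_at D \<theta>" "0 < t"
  shows "D t < 0 \<longleftrightarrow> t < \<theta>"
  using assms unfolding sign_change_at_def by (cases t \<theta> rule: linorder_cases) auto

lemma sign_change_at_pos_iff:
  assumes "sign_change_at D \<theta>" "0 < t"
  shows "0 < D t \<longleftrightarrow> \<theta> < t"
  using assms unfolding sign_change_at_def by (cases t \<theta> rule: linorder_cases) auto

lemma sign_change_at_imp_min:
  assumes sc: "sign_change_at D \<theta>" and deriv: "\<And>t. DERIV q t :> D t" and "0 \<le> t"
  shows "q \<theta> \<le> q t"
proof -
  have cont: "continuous_on S q" for S
    using deriv by (intro continuous_at_imp_continuous_on ballI DERIV_isCont)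
  show ?thesis
  proof (cases "t \<le> \<theta>")
    case True
    show ?thesis
    proof (rule DERIV_nonpos_imp_decreasing_open[OF True _ cont])
      fix x assume "t < x" "x < \<theta>"
      then show "\<exists>y. DERIV q x :> y \<and> y \<le> 0"
        using deriv sc \<open>0 \<le> t\<close> unfolding sign_change_at_def
        by (intro exI[of _ "D x"]) (auto intro: less_imp_le)
    qed
  next
    case False
    show ?thesis
    proof (rule DERIV_nonneg_imp_increasing_open[OF _ _ cont])
      fix x assume "\<theta> < x" "x < t"
      then show "\<exists>y. DERIV q x :> y \<and> 0 \<le> y"
        using deriv sc unfolding sign_change_at_def
        by (intro exI[of _ "D x"]) (auto intro: less_imp_le)
    qed (use False in simp)
  qed
qed

lemma isCont_sign_change_point:
  fixes D :: "real \<Rightarrow> real \<Rightarrow> real"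
  assumes "open S" "c0 \<in> S"
    and sc: "\<And>c. c \<in> S \<Longrightarrow> sign_change_at (D c) (\<theta> c)"
    and cont: "\<And>t. isCont (\<lambda>c. D c t) c0"
  shows "isCont \<theta> c0"
proof -
  have near: "eventually (\<lambda>c. c \<in> S) (at c0)"
    using assms(1,2) by (rule eventually_at_in_open')
  have pos: "0 < \<theta> c" if "c \<in> S" for c
    using sc[OF that] by (simp add: sign_change_at_def)
  show ?thesis
    unfolding continuous_at
  proof (rule order_tendstoI)
    fix y
    assume y: "y < \<theta> c0"
    show "eventually (\<lambda>c. y < \<theta> c) (at c0)"
    proof (cases "0 < y")
      case True
      then have "D c0 y < 0"
        using y sign_change_at_neg_iff[OF sc[OF assms(2)]] by blast
      then have "eventually (\<lambda>c. D c y < 0) (at c0)"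
        using cont[of y] by (simp add: continuous_at order_tendstoD(2))
      with near show ?thesis
        by eventually_elim (use True sign_change_at_neg_iff[OF sc] in blast)
    next
      case False
      from near show ?thesis
        by eventually_elim (use False pos in force)
    qed
  next
    fix y
    assume y: "\<theta> c0 < y"
    then have "0 < y"
      using pos[OF assms(2)] by simp
    then have "0 < D c0 y"
      using y sign_change_at_pos_iff[OF sc[OF assms(2)]] by blast
    then have "eventually (\<lambda>c. 0 < D c y) (at c0)"
      using cont[of y] by (simp add: continuous_at order_tendstoD(1))
    with near show "eventually (\<lambda>c. \<theta> c < y) (at c0)"
      by eventually_elim (use \<open>0 < y\<close> sign_change_at_pos_iff[OF sc] in blast)
  qed
qed


locale symmetric_density =
  fixes f0 :: "real \<Rightarrow> real"
  assumes sym_cont_density: "sym_cont_density f0"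
begin

lemma continuous_f0: "continuous_on UNIV f0"
  and f0_nonneg: "0 \<le> f0 z"
  and integrable_f0: "integrable lborel f0"
  and integral_f0: "integral\<^sup>L lborel f0 = 1"
  and f0_minus: "f0 (- z) = f0 z"
  using sym_cont_density by (simp_all add: sym_cont_density_def)

lemma f0_measurable [measurable]: "f0 \<in> borel_measurable borel"
  by (rule borel_measurable_continuous_onI[OF continuous_f0])

definition law :: "real measure" where
  "law = density lborel (\<lambda>x. ennreal (f0 x))"

lemma sets_law [simp, measurable_cong]: "sets law = sets borel"
  by (simp add: law_def)

lemma emeasure_law: "A \<in> sets borel \<Longrightarrow> emeasure law A = ennreal (LINT x:A|lborel. f0 x)"
proof -
  assume A: "A \<in> sets borel"
  have "emeasure law A = (\<integral>\<^sup>+ x. ennreal (indicator A x *\<^sub>R f0 x) \<partial>lborel)"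
    unfolding law_def using A
    by (subst emeasure_density) (auto intro!: nn_integral_cong split: split_indicator)
  also have "\<dots> = ennreal (LINT x:A|lborel. f0 x)"
    unfolding set_lebesgue_integral_def using A f0_nonneg
    by (intro nn_integral_eq_integral integrable_mult_indicator integrable_f0)
      (auto split: split_indicator)
  finally show ?thesis .
qed

lemma real_distribution_law: "real_distribution law"
proof -
  have "prob_space law"
    using emeasure_law[of UNIV] integral_f0
    by (intro prob_spaceI) (simp_all add: law_def set_lebesgue_integral_def)
  then show ?thesis
    by (simp add: real_distribution_def real_distribution_axioms_def)
qed

sublocale law: real_distribution law
  by (rule real_distribution_law)

lemma measure_law: "A \<in> sets borel \<Longrightarrow> measure law A = (LINT x:A|lborel. f0 x)"
proof -
  assume A: "A \<in> sets borel"
  have "0 \<le> (LINT x:A|lborel. f0 x)"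
    unfolding set_lebesgue_integral_def
    by (rule integral_nonneg_AE) (simp add: f0_nonneg split: split_indicator)
  then show ?thesis
    using emeasure_law[OF A] by (simp add: law.emeasure_eq_measure)
qed

lemma cdf0_eq_cdf_law: "cdf0 f0 = cdf law"
  by (simp add: fun_eq_iff cdf0_def cdf_def measure_law)

lemma cdf_law_eq_add_integral:
  assumes "a \<le> u"
  shows "cdf law u = cdf law a + (LBINT y=a..u. f0 y)"
proof (cases "a = u")
  case False
  with assms have "cdf law u - cdf law a = (LBINT y=a..u. f0 y)"
    by (simp add: law.cdf_diff_eq measure_law interval_integral_Ioc)
  then show ?thesis
    by simp
qed simp

lemma has_real_derivative_cdf_law: "DERIV (cdf law) x :> f0 x"
proof -
  have "((\<lambda>u. LBINT y=x-1..u. f0 y) has_vector_derivative f0 x) (at x within {x-1..x+1})"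
    by (rule interval_integral_FTC2) (auto intro: continuous_on_subset[OF continuous_f0])
  then have "((\<lambda>u. cdf law (x-1) + (LBINT y=x-1..u. f0 y)) has_field_derivative f0 x) (at x)"
    by (auto simp: at_within_Icc_at has_real_derivative_iff_has_vector_derivative[symmetric]
        intro!: derivative_eq_intros)
  then show ?thesis
    by (rule has_field_derivative_transform_within_open[where S="{x-1<..}"])
      (auto intro!: cdf_law_eq_add_integral[symmetric])
qed

lemma continuous_on_cdf_law: "continuous_on S (cdf law)"
  using has_real_derivative_cdf_law by (intro continuous_at_imp_continuous_on ballI DERIV_isCont)

lemma measure_law_singleton [simp]: "measure law {x} = 0"
  using law.isCont_cdf continuous_on_cdf_law[of UNIV] by (simp add: continuous_on_eq_continuous_at)

lemma measure_law_atLeast: "measure law {x..} = 1 - cdf law x"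
proof -
  have "measure law {x..} = measure law (UNIV - {..x}) + measure law {x}"
    by (subst law.finite_measure_Union[symmetric]) (auto intro: arg_cong[where f="measure law"])
  then show ?thesis
    by (simp add: law.prob_compl[unfolded law.space_eq_univ] cdf_def)
qed

lemma distr_law_uminus: "distr law borel uminus = law"
proof -
  have "law = density (distr lborel borel uminus) (\<lambda>x. ennreal (f0 x))"
    by (simp add: law_def lborel_distr_uminus)
  also have "\<dots> = distr law borel uminus"
    by (subst density_distr) (simp_all add: law_def f0_minus)
  finally show ?thesis ..
qed

lemma measure_law_vimage_uminus:
  "A \<in> sets borel \<Longrightarrow> measure law (uminus -` A) = measure law A"
  by (subst (2) distr_law_uminus[symmetric]) (simp add: measure_distr)

lemma locscale_eq_distr_law:
  assumes "0 < \<sigma>"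
  shows "locscale f0 \<mu> \<sigma> = distr law borel (\<lambda>z. \<mu> + \<sigma> * z)"
proof -
  let ?g = "\<lambda>x. ennreal (f0 ((x - \<mu>) / \<sigma>) / \<sigma>)"
  have "locscale f0 \<mu> \<sigma> = density (density (distr lborel borel (\<lambda>z. \<mu> + \<sigma> * z)) (\<lambda>_. ennreal \<sigma>)) ?g"
    unfolding locscale_def using assms by (subst lborel_real_affine[of \<sigma> \<mu>]) simp_all
  also have "\<dots> = density (distr lborel borel (\<lambda>z. \<mu> + \<sigma> * z)) (\<lambda>x. ennreal \<sigma> * ?g x)"
    by (simp add: density_density_eq)
  also have "\<dots> = distr (density lborel (\<lambda>z. ennreal \<sigma> * ?g (\<mu> + \<sigma> * z))) borel (\<lambda>z. \<mu> + \<sigma> * z)"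
    by (simp add: density_distr)
  also have "(\<lambda>z. ennreal \<sigma> * ?g (\<mu> + \<sigma> * z)) = (\<lambda>z. ennreal (f0 z))"
    using assms f0_nonneg by (simp add: fun_eq_iff ennreal_mult[symmetric])
  finally show ?thesis
    by (simp add: law_def)
qed

definition coverage :: "real \<Rightarrow> real \<Rightarrow> real" where
  "coverage c t = cdf law (c / (c + 1) * t) + 1 - cdf law (c / (c - 1) * t)"

lemma measure_law_tails:
  assumes "a \<le> b"
  shows "measure law ({..a} \<union> {b..}) = cdf law a + 1 - cdf law b"
proof (cases "a = b")
  case True
  then have "{..a} \<union> {b..} = space law"
    by auto
  with True show ?thesis
    using law.prob_space by simp
next
  case False
  with assms have "{..a} \<inter> {b..} = {}"
    by auto
  then show ?thesis
    by (simp add: law.finite_measure_Union measure_law_atLeast cdf_def)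
qed

lemma measure_law_abs_le_mult_abs_diff:
  assumes "1 < c" "0 \<le> n"
  shows "measure law {z. \<bar>z\<bar> \<le> c * \<bar>z - n\<bar>} = coverage c n"
proof -
  have "{z. \<bar>z\<bar> \<le> c * \<bar>z - n\<bar>} = {..c / (c + 1) * n} \<union> {c / (c - 1) * n..}"
    using abs_le_mult_abs_diff_iff[OF assms] by auto
  moreover have "c / (c + 1) * n \<le> c / (c - 1) * n"
    using assms by (intro mult_right_mono divide_left_mono) auto
  ultimately show ?thesis
    by (simp add: measure_law_tails coverage_def)
qed

lemma cover_prob_eq_coverage:
  assumes "0 < \<sigma>" "1 < c"
  shows "cover_prob f0 c \<mu> \<sigma> = coverage c \<bar>\<mu> / \<sigma>\<bar>"
proof -
  define m where "m = \<mu> / \<sigma>"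
  let ?E = "{x. x - c * \<bar>x\<bar> \<le> \<mu> \<and> \<mu> \<le> x + c * \<bar>x\<bar>}"
  have "?E \<in> sets borel"
    by (intro borel_closed closed_Collect_conj closed_Collect_le continuous_intros)
  moreover have "(\<lambda>z. \<mu> + \<sigma> * z) -` ?E = {z. \<bar>z\<bar> \<le> c * \<bar>z + m\<bar>}"
    using abs_standardize_coverage_event[OF assms(1)] by (auto simp: m_def)
  ultimately have cover: "cover_prob f0 c \<mu> \<sigma> = measure law {z. \<bar>z\<bar> \<le> c * \<bar>z + m\<bar>}"
    unfolding cover_prob_def using assms by (simp add: locscale_eq_distr_law measure_distr)
  have reflect: "{z. \<bar>z\<bar> \<le> c * \<bar>z + m\<bar>} = uminus -` {z. \<bar>z\<bar> \<le> c * \<bar>z - m\<bar>}"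
    by (force simp: abs_minus_commute add.commute)
  have "{z. \<bar>z\<bar> \<le> c * \<bar>z - m\<bar>} \<in> sets borel"
    by (intro borel_closed closed_Collect_le continuous_intros)
  then have "measure law {z. \<bar>z\<bar> \<le> c * \<bar>z + m\<bar>} = measure law {z. \<bar>z\<bar> \<le> c * \<bar>z - m\<bar>}"
    unfolding reflect by (rule measure_law_vimage_uminus)
  then have "measure law {z. \<bar>z\<bar> \<le> c * \<bar>z + m\<bar>} = measure law {z. \<bar>z\<bar> \<le> c * \<bar>z - \<bar>m\<bar>\<bar>}"
    by (cases "0 \<le> m") simp_all
  with cover show ?thesis
    using assms(2) by (simp add: measure_law_abs_le_mult_abs_diff m_def)
qed

definition coverage_deriv :: "real \<Rightarrow> real \<Rightarrow> real" where
  "coverage_deriv c t = c / (c + 1) * f0 (c / (c + 1) * t) - c / (c - 1) * f0 (c / (c - 1) * t)"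

lemma isCont_f0: "isCont f0 x"
  using continuous_f0 by (simp add: continuous_on_eq_continuous_at)

lemma has_real_derivative_cdf_law_scaled: "DERIV (\<lambda>t. cdf law (k * t)) t :> k * f0 (k * t)"
  using DERIV_chain2[OF has_real_derivative_cdf_law DERIV_cmult_Id[of k t]]
  by (simp add: mult.commute)

lemma has_real_derivative_coverage: "DERIV (coverage c) t :> coverage_deriv c t"
proof -
  have "DERIV (\<lambda>t. cdf law (c / (c + 1) * t) + 1 - cdf law (c / (c - 1) * t)) t :>
      c / (c + 1) * f0 (c / (c + 1) * t) + 0 - c / (c - 1) * f0 (c / (c - 1) * t)"
    by (intro DERIV_diff DERIV_add has_real_derivative_cdf_law_scaled DERIV_const)
  then show ?thesis
    by (simp add: coverage_def[abs_def] coverage_deriv_def)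
qed

lemma continuous_on_coverage_deriv: "continuous_on S (coverage_deriv c)"
  unfolding coverage_deriv_def
  by (intro continuous_intros continuous_on_compose2[OF continuous_f0]) auto

lemma isCont_coverage_deriv_param: "1 < c \<Longrightarrow> isCont (\<lambda>c. coverage_deriv c t) c"
  unfolding coverage_deriv_def by (intro continuous_intros isCont_o2[OF _ isCont_f0]) auto

lemma continuous_on_coverage: "continuous_on S (coverage c)"
  using has_real_derivative_coverage
  by (intro continuous_at_imp_continuous_on ballI DERIV_isCont)

lemma coverage_0 [simp]: "coverage c 0 = 1"
  by (simp add: coverage_def)

lemma coverage_le_1:
  assumes "1 < c" "0 \<le> t"
  shows "coverage c t \<le> 1"
proof -
  have "c / (c + 1) * t \<le> c / (c - 1) * t"
    using assms by (intro mult_right_mono divide_left_mono) auto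
  then show ?thesis
    unfolding coverage_def using law.cdf_nondecreasing by force
qed

lemma coverage_tendsto_1:
  assumes "1 < c"
  shows "(coverage c \<longlongrightarrow> 1) at_top"
proof -
  have "((\<lambda>t. cdf law (k * t)) \<longlongrightarrow> 1) at_top" if "0 < k" for k
    using that by (intro filterlim_compose[OF law.cdf_lim_at_top_prob]
        filterlim_tendsto_pos_mult_at_top[OF tendsto_const _ filterlim_ident])
  from this[of "c / (c + 1)"] this[of "c / (c - 1)"]
  have "((\<lambda>t. cdf law (c / (c + 1) * t) + 1 - cdf law (c / (c - 1) * t)) \<longlongrightarrow> 1 + 1 - 1) at_top"
    using assms by (intro tendsto_intros) auto
  then show ?thesis
    by (simp add: coverage_def[abs_def])
qed

lemma psi_eq_coverage_theta: "psi f0 c = coverage c (theta f0 c)"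
  by (simp add: psi_def coverage_def cdf0_eq_cdf_law)

end

locale mlr_symmetric_density = symmetric_density +
  assumes mlr: "\<And>\<alpha>1 \<alpha>2. 0 < \<alpha>1 \<Longrightarrow> \<alpha>1 < \<alpha>2 \<Longrightarrow>
    strictly_monotone_on {0<..} (\<lambda>\<theta>. gsc f0 \<alpha>2 \<theta> / gsc f0 \<alpha>1 \<theta>)"
begin

lemma f0_pos:
  assumes "0 < z"
  shows "0 < f0 z"
proof -
  have "0 < gsc f0 2 (z / 2) / gsc f0 1 (z / 2)"
    using assms
    by (intro strictly_monotone_on_nonneg_imp_pos[OF mlr]) (simp_all add: gsc_def f0_nonneg)
  then show ?thesis
    using f0_nonneg[of z] by (auto simp: gsc_def zero_less_divide_iff)
qed

lemma root_eq_iff_coverage_deriv_eq_0: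
  assumes "1 < c" "0 < t"
  shows "root_eq f0 c t \<longleftrightarrow> coverage_deriv c t = 0"
proof -
  have "0 < f0 (c / (c - 1) * t)"
    using assms by (intro f0_pos) simp
  then have "root_eq f0 c t \<longleftrightarrow> f0 (c / (c + 1) * t) * (c - 1) - (c + 1) * f0 (c / (c - 1) * t) = 0"
    using assms unfolding root_eq_def by (simp add: divide_simps)
  moreover have "coverage_deriv c t =
      c * (f0 (c / (c + 1) * t) * (c - 1) - (c + 1) * f0 (c / (c - 1) * t)) / ((c + 1) * (c - 1))"
    using assms unfolding coverage_deriv_def by (simp add: field_simps)
  ultimately show ?thesis
    using assms by simp
qed

lemma not_coverage_deriv_pos_below:
  assumes "1 < c" "0 < \<theta>"
  shows "\<not> (\<forall>t. 0 < t \<longrightarrow> t < \<theta> \<longrightarrow> 0 < coverage_deriv c t)"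
proof
  assume pos: "\<forall>t. 0 < t \<longrightarrow> t < \<theta> \<longrightarrow> 0 < coverage_deriv c t"
  have "coverage c 0 < coverage c \<theta>"
  proof (rule DERIV_pos_imp_increasing_open[OF assms(2) _ continuous_on_coverage])
    fix t
    assume "0 < t" "t < \<theta>"
    then show "\<exists>y. DERIV (coverage c) t :> y \<and> 0 < y"
      using pos has_real_derivative_coverage by blast
  qed
  with coverage_le_1[OF assms(1), of \<theta>] assms(2) show False
    by simp
qed

lemma coverage_deriv_eq_likelihood_ratio:
  assumes "1 < c" "0 < t"
  shows "coverage_deriv c t =
      gsc f0 (c / (c + 1)) t * (1 - gsc f0 (c / (c - 1)) t / gsc f0 (c / (c + 1)) t)"
proof -
  have "0 < f0 (c / (c + 1) * t)"
    using assms by (intro f0_pos) simp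
  then have "gsc f0 (c / (c + 1)) t \<noteq> 0"
    using assms by (simp add: gsc_def)
  then have "gsc f0 (c / (c + 1)) t * (1 - gsc f0 (c / (c - 1)) t / gsc f0 (c / (c + 1)) t) =
      gsc f0 (c / (c + 1)) t - gsc f0 (c / (c - 1)) t"
    by (simp add: right_diff_distrib)
  then show ?thesis
    by (simp add: coverage_deriv_def gsc_def)
qed

text \<open>
  At a root \<open>\<theta>\<close> the likelihood ratio \<open>R\<close> equals 1; were \<open>R\<close> increasing, the derivative
  \<open>g(\<cdot>|A) (1 - R)\<close> would be positive on \<open>(0, \<theta>)\<close>.
\<close>

lemma coverage_deriv_sign_change:
  assumes c: "1 < c"
  obtains \<theta> where "sign_change_at (coverage_deriv c) \<theta>"
proof -
  define A B where "A = c / (c + 1)" and "B = c / (c - 1)"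
  define R where "R = (\<lambda>t. gsc f0 B t / gsc f0 A t)"
  have "0 < A" "A < B"
    using c by (auto simp: A_def B_def intro!: divide_strict_left_mono)
  have gA: "0 < gsc f0 A t" if "0 < t" for t
    using \<open>0 < A\<close> that by (simp add: gsc_def f0_pos)
  have D: "coverage_deriv c t = gsc f0 A t * (1 - R t)" if "0 < t" for t
    using coverage_deriv_eq_likelihood_ratio[OF c that] by (simp add: R_def A_def B_def)
  have "\<exists>\<theta>>0. coverage_deriv c \<theta> = 0"
    by (rule deriv_has_root_if_max_at_endpoints[OF has_real_derivative_coverage
          continuous_on_coverage_deriv]) (simp_all add: c coverage_le_1 coverage_tendsto_1)
  then obtain \<theta> where \<theta>: "0 < \<theta>" "coverage_deriv c \<theta> = 0"
    by blast
  then have "R \<theta> = 1"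
    using D gA by force
  from mlr[OF \<open>0 < A\<close> \<open>A < B\<close>]
  consider (inc) "monotone_on {0<..} (<) (<) R" | (dec) "monotone_on {0<..} (<) (>) R"
    unfolding strictly_monotone_on_def R_def by blast
  then show ?thesis
  proof cases
    case inc
    have "0 < coverage_deriv c t" if "0 < t" "t < \<theta>" for t
    proof -
      have "R t < R \<theta>"
        using inc that \<theta>(1) by (simp add: monotone_on_def)
      then show ?thesis
        using that D gA \<open>R \<theta> = 1\<close> by simp
    qed
    with not_coverage_deriv_pos_below[OF c \<theta>(1)] show ?thesis
      by blast
  next
    case dec
    have "coverage_deriv c t < 0" if "0 < t" "t < \<theta>" for t
    proof -
      have "R \<theta> < R t"
        using dec that \<theta>(1) by (simp add: monotone_on_def)
      then show ?thesis
        using that D gA \<open>R \<theta> = 1\<close> by (simp add: mult_pos_neg)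
    qed
    moreover have "0 < coverage_deriv c t" if "\<theta> < t" for t
    proof -
      have "R t < R \<theta>" "0 < t"
        using dec that \<theta>(1) by (simp_all add: monotone_on_def)
      then show ?thesis
        using D gA \<open>R \<theta> = 1\<close> by simp
    qed
    ultimately have "sign_change_at (coverage_deriv c) \<theta>"
      using \<theta> by (simp add: sign_change_at_def)
    then show ?thesis
      by (rule that)
  qed
qed

lemma positive_root_eq_iff:
  assumes "1 < c" "sign_change_at (coverage_deriv c) \<theta>"
  shows "0 < t \<and> root_eq f0 c t \<longleftrightarrow> t = \<theta>"
proof
  assume "0 < t \<and> root_eq f0 c t"
  then have "0 < t \<and> coverage_deriv c t = 0"
    using root_eq_iff_coverage_deriv_eq_0[OF assms(1)] by blast
  then show "t = \<theta>"
    using sign_change_at_unique[OF assms(2)] by blast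
next
  assume "t = \<theta>"
  then have "0 < t" "coverage_deriv c t = 0"
    using assms(2) by (simp_all add: sign_change_at_def)
  then show "0 < t \<and> root_eq f0 c t"
    using root_eq_iff_coverage_deriv_eq_0[OF assms(1)] by blast
qed

lemma sign_change_at_theta:
  assumes "1 < c"
  shows "sign_change_at (coverage_deriv c) (theta f0 c)"
proof -
  obtain \<theta> where \<theta>: "sign_change_at (coverage_deriv c) \<theta>"
    using coverage_deriv_sign_change[OF assms] .
  then have "theta f0 c = \<theta>"
    unfolding theta_def positive_root_eq_iff[OF assms \<theta>] by simp
  with \<theta> show ?thesis
    by simp
qed

lemma ex1_positive_root:
  assumes "1 < c"
  shows "\<exists>!t. 0 < t \<and> root_eq f0 c t"
proof -
  have "0 < t \<and> root_eq f0 c t \<longleftrightarrow> t = theta f0 c" for t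
    using positive_root_eq_iff[OF assms sign_change_at_theta[OF assms]] .
  then show ?thesis
    by (intro ex1I[of _ "theta f0 c"]) simp_all
qed

lemma continuous_on_theta: "continuous_on {1<..} (theta f0)"
proof (intro continuous_at_imp_continuous_on ballI)
  fix c0 :: real
  assume c0: "c0 \<in> {1<..}"
  show "isCont (theta f0) c0"
  proof (rule isCont_sign_change_point[of "{1<..}" c0 coverage_deriv])
    show "sign_change_at (coverage_deriv c) (theta f0 c)" if "c \<in> {1<..}" for c
      using that by (simp add: sign_change_at_theta)
    show "isCont (\<lambda>c. coverage_deriv c t) c0" for t
      using c0 by (simp add: isCont_coverage_deriv_param)
  qed (use c0 in simp_all)
qed

lemma continuous_on_psi: "continuous_on {1<..} (psi f0)"
proof -
  have "continuous_on {1<..} (\<lambda>c. cdf law (c / (c + 1) * theta f0 c))"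
    by (rule continuous_on_compose2[OF continuous_on_cdf_law _ subset_UNIV])
      (intro continuous_intros continuous_on_theta, auto)
  moreover have "continuous_on {1<..} (\<lambda>c. cdf law (c / (c - 1) * theta f0 c))"
    by (rule continuous_on_compose2[OF continuous_on_cdf_law _ subset_UNIV])
      (intro continuous_intros continuous_on_theta, auto)
  ultimately show ?thesis
    unfolding psi_eq_coverage_theta[abs_def] coverage_def by (intro continuous_intros)
qed

lemma INF_cover_prob_eq_psi:
  assumes c: "1 < c"
  shows "(INF p \<in> UNIV \<times> {0<..}. cover_prob f0 c (fst p) (snd p)) = psi f0 c"
proof -
  have "psi f0 c \<in> (\<lambda>p. cover_prob f0 c (fst p) (snd p)) ` (UNIV \<times> {0<..})"
    using c sign_change_at_theta[OF c]
    by (intro image_eqI[where x="(theta f0 c, 1)"])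
      (auto simp: cover_prob_eq_coverage psi_eq_coverage_theta sign_change_at_def)
  moreover have "psi f0 c \<le> cover_prob f0 c \<mu> \<sigma>" if "0 < \<sigma>" for \<mu> \<sigma>
    using c that
    by (simp add: cover_prob_eq_coverage psi_eq_coverage_theta
        sign_change_at_imp_min[OF sign_change_at_theta has_real_derivative_coverage])
  ultimately show ?thesis
    by (intro cInf_eq_minimum) auto
qed

end

theorem theorem3p2:
  fixes f0 :: "real \<Rightarrow> real"
  assumes dens: "sym_cont_density f0"
    and mlr: "\<And>\<alpha>1 \<alpha>2. 0 < \<alpha>1 \<Longrightarrow> \<alpha>1 < \<alpha>2 \<Longrightarrow>
               strictly_monotone_on {0<..} (\<lambda>\<theta>. gsc f0 \<alpha>2 \<theta> / gsc f0 \<alpha>1 \<theta>)"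
    and cvx: "\<And>\<alpha>1 \<alpha>2. 0 < \<alpha>1 \<Longrightarrow> \<alpha>1 < \<alpha>2 \<Longrightarrow>
               convex_on {0<..} (\<lambda>\<theta>. ln (gsc f0 \<alpha>2 \<theta> / gsc f0 \<alpha>1 \<theta>))"
  shows "(\<forall>c>1. \<exists>!t. 0 < t \<and> root_eq f0 c t)
       \<and> continuous_on {1<..} (theta f0)
       \<and> (\<forall>c>1. (INF p \<in> UNIV \<times> {0<..}. cover_prob f0 c (fst p) (snd p)) = psi f0 c)
       \<and> continuous_on {1<..} (psi f0)"
proof -
  interpret mlr_symmetric_density f0
    using dens mlr by unfold_locales
  show ?thesis
    using ex1_positive_root continuous_on_theta INF_cover_prob_eq_psi continuous_on_psi by blast
qed

end
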